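(* Let $\Gamma$ be a cofinite graph and let $\Sigma$ be a uniform subgraph of $\Gamma$ (a subgraph with the subspace uniformity, which is itself a cofinite graph). Then: (1) If $\Sigma$ is path connected, then $\Sigma$ is cofinitely connected. (2) If $\Sigma$ is cofinitely connected, then so is its closure $\overline{\Sigma}$ in $\Gamma$ (which is a cofinite subgraph of $\Gamma$). (3) If $\Sigma$ is cofinitely connected and $f\colon\Gamma\to\Delta$ is a uniformly continuous map of graphs into a cofinite graph $\Delta$, then $f(\Sigma)$ is cofinitely connected as a cofinite subgraph of $\Delta$.
   Context: A graph $\Gamma$ is a set $\Gamma=V(\Gamma)\sqcup E(\Gamma)$ with maps $s,t\colon E(\Gamma)\to V(\Gamma)$ and a fixed-point-free involution $e\mapsto\overline e$ of $E(\Gamma)$ with $s(\overline e)=t(e)$, $t(\overline e)=s(e)$. A subgraph is a subset closed under $s,t$ and $e\mapsto\overline e$. A map of graphs sends vertices to vertices and edges to edges and commutes with $s$, $t$ and $e\mapsto\overline e$. An equivalence relation $R$ on a graph is compatible if $R\subseteq (V\times V)\cup(E\times E)$, $(e,e')\in R$ implies $(s(e),s(e')),(t(e),t(e')),(\overline e,\overline{e'})\in R$, and $(e,\overline e)\notin R$ for all edges $e$; then $\Gamma/R$ is a graph. A cofinite entourage is an entourage that is an equivalence relation with finitely many classes. A cofinite graph is a graph with a Hausdorff uniformity in which the compatible cofinite entourages form a fundamental system of entourages. A graph is path connected if any two vertices are joined by a finite path of edges $e_1\cdots e_n$ with $t(e_i)=s(e_{i+1})$. A cofinite graph is cofinitely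 connected if $\Gamma/R$ is path connected for every compatible cofinite entourage $R$. *)

theory Defs
  imports Main
begin

text \<open>A graph (possibly with a uniformity) living in an ambient type 'a:
  carrier = the set Gamma = V(Gamma) disjoint-union E(Gamma), verts = V(Gamma),
  edges are carrier - verts; src, tgt are s, t; rev is the involution e |-> bar e;
  unif is the set of entourages of the uniformity on the carrier.\<close>
record 'a cgraph =
  carrier :: "'a set"
  verts :: "'a set"
  src :: "'a \<Rightarrow> 'a"
  tgt :: "'a \<Rightarrow> 'a"
  rev :: "'a \<Rightarrow> 'a"
  unif :: "('a \<times> 'a) set set"

definition edges :: "('a, 'b) cgraph_scheme \<Rightarrow> 'a set" where
  "edges \<Gamma> = carrier \<Gamma> - verts \<Gamma>"

definition is_graph :: "('a, 'b) cgraph_scheme \<Rightarrow> bool" where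
  "is_graph \<Gamma> \<longleftrightarrow> verts \<Gamma> \<subseteq> carrier \<Gamma> \<and>
     (\<forall>e\<in>edges \<Gamma>. src \<Gamma> e \<in> verts \<Gamma> \<and> tgt \<Gamma> e \<in> verts \<Gamma> \<and>
        rev \<Gamma> e \<in> edges \<Gamma> \<and> rev \<Gamma> e \<noteq> e \<and> rev \<Gamma> (rev \<Gamma> e) = e \<and>
        src \<Gamma> (rev \<Gamma> e) = tgt \<Gamma> e \<and> tgt \<Gamma> (rev \<Gamma> e) = src \<Gamma> e)"

definition is_subgraph :: "'a set \<Rightarrow> ('a, 'b) cgraph_scheme \<Rightarrow> bool" where
  "is_subgraph S \<Gamma> \<longleftrightarrow> S \<subseteq> carrier \<Gamma> \<and>
     (\<forall>e\<in>S \<inter> edges \<Gamma>. src \<Gamma> e \<in> S \<and> tgt \<Gamma> e \<in> S \<and> rev \<Gamma> e \<in> S)"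

definition uniformity_on :: "'a set \<Rightarrow> ('a \<times> 'a) set set \<Rightarrow> bool" where
  "uniformity_on X U \<longleftrightarrow> U \<subseteq> Pow (X \<times> X) \<and> X \<times> X \<in> U \<and>
     (\<forall>D\<in>U. Id_on X \<subseteq> D) \<and>
     (\<forall>D\<in>U. \<forall>D'. D \<subseteq> D' \<and> D' \<subseteq> X \<times> X \<longrightarrow> D' \<in> U) \<and>
     (\<forall>D\<in>U. \<forall>D'\<in>U. D \<inter> D' \<in> U) \<and>
     (\<forall>D\<in>U. D\<inverse> \<in> U) \<and>
     (\<forall>D\<in>U. \<exists>D'\<in>U. D' O D' \<subseteq> D)"

definition hausdorff_unif :: "'a set \<Rightarrow> ('a \<times> 'a) set set \<Rightarrow> bool" where
  "hausdorff_unif X U \<longleftrightarrow> \<Inter>U = Id_on X"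

definition compatible :: "('a, 'b) cgraph_scheme \<Rightarrow> ('a \<times> 'a) set \<Rightarrow> bool" where
  "compatible \<Gamma> R \<longleftrightarrow> equiv (carrier \<Gamma>) R \<and>
     R \<subseteq> (verts \<Gamma> \<times> verts \<Gamma>) \<union> (edges \<Gamma> \<times> edges \<Gamma>) \<and>
     (\<forall>e e'. (e, e') \<in> R \<and> e \<in> edges \<Gamma> \<longrightarrow>
        (src \<Gamma> e, src \<Gamma> e') \<in> R \<and> (tgt \<Gamma> e, tgt \<Gamma> e') \<in> R \<and>
        (rev \<Gamma> e, rev \<Gamma> e') \<in> R) \<and>
     (\<forall>e\<in>edges \<Gamma>. (e, rev \<Gamma> e) \<notin> R)"

definition compatible_cofinite_entourage :: "('a, 'b) cgraph_scheme \<Rightarrow> ('a \<times> 'a) set \<Rightarrow> bool" where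
  "compatible_cofinite_entourage \<Gamma> R \<longleftrightarrow> R \<in> unif \<Gamma> \<and> compatible \<Gamma> R \<and>
     finite (carrier \<Gamma> // R)"

definition cofinite_graph :: "('a, 'b) cgraph_scheme \<Rightarrow> bool" where
  "cofinite_graph \<Gamma> \<longleftrightarrow> is_graph \<Gamma> \<and> uniformity_on (carrier \<Gamma>) (unif \<Gamma>) \<and>
     hausdorff_unif (carrier \<Gamma>) (unif \<Gamma>) \<and>
     (\<forall>D\<in>unif \<Gamma>. \<exists>R. compatible_cofinite_entourage \<Gamma> R \<and> R \<subseteq> D)"

text \<open>Quotient graph Gamma/R (on equivalence classes); its uniformity is irrelevant.\<close>
definition quotient_graph :: "('a, 'b) cgraph_scheme \<Rightarrow> ('a \<times> 'a) set \<Rightarrow> 'a set cgraph" where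
  "quotient_graph \<Gamma> R =
    \<lparr> carrier = carrier \<Gamma> // R, verts = verts \<Gamma> // R,
      src = (\<lambda>C. R `` {src \<Gamma> (SOME e. e \<in> C)}),
      tgt = (\<lambda>C. R `` {tgt \<Gamma> (SOME e. e \<in> C)}),
      rev = (\<lambda>C. R `` {rev \<Gamma> (SOME e. e \<in> C)}),
      unif = {} \<rparr>"

definition path_connected_graph :: "('a, 'b) cgraph_scheme \<Rightarrow> bool" where
  "path_connected_graph \<Gamma> \<longleftrightarrow>
     (\<forall>v\<in>verts \<Gamma>. \<forall>w\<in>verts \<Gamma>. v = w \<or>
        (\<exists>es. es \<noteq> [] \<and> set es \<subseteq> edges \<Gamma> \<and> src \<Gamma> (hd es) = v \<and> tgt \<Gamma> (last es) = w \<and>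
              (\<forall>i. Suc i < length es \<longrightarrow> tgt \<Gamma> (es ! i) = src \<Gamma> (es ! Suc i))))"

definition cofinitely_connected :: "('a, 'b) cgraph_scheme \<Rightarrow> bool" where
  "cofinitely_connected \<Gamma> \<longleftrightarrow>
     (\<forall>R. compatible_cofinite_entourage \<Gamma> R \<longrightarrow> path_connected_graph (quotient_graph \<Gamma> R))"

definition uniform_subgraph :: "'a cgraph \<Rightarrow> 'a set \<Rightarrow> 'a cgraph" where
  "uniform_subgraph \<Gamma> S = \<Gamma>\<lparr> carrier := S, verts := verts \<Gamma> \<inter> S,
      unif := {D \<inter> (S \<times> S) | D. D \<in> unif \<Gamma>} \<rparr>"

definition unif_closure :: "'a cgraph \<Rightarrow> 'a set \<Rightarrow> 'a set" where
  "unif_closure \<Gamma> S = {x \<in> carrier \<Gamma>. \<forall>D\<in>unif \<Gamma>. \<exists>y\<in>S. (x, y) \<in> D}"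

definition graph_map :: "'a cgraph \<Rightarrow> 'b cgraph \<Rightarrow> ('a \<Rightarrow> 'b) \<Rightarrow> bool" where
  "graph_map \<Gamma> \<Delta> f \<longleftrightarrow> f ` verts \<Gamma> \<subseteq> verts \<Delta> \<and> f ` edges \<Gamma> \<subseteq> edges \<Delta> \<and>
     (\<forall>e\<in>edges \<Gamma>. f (src \<Gamma> e) = src \<Delta> (f e) \<and> f (tgt \<Gamma> e) = tgt \<Delta> (f e) \<and>
        f (rev \<Gamma> e) = rev \<Delta> (f e))"

definition unif_continuous :: "'a cgraph \<Rightarrow> 'b cgraph \<Rightarrow> ('a \<Rightarrow> 'b) \<Rightarrow> bool" where
  "unif_continuous \<Gamma> \<Delta> f \<longleftrightarrow>
     (\<forall>D\<in>unif \<Delta>. {(x, y). x \<in> carrier \<Gamma> \<and> y \<in> carrier \<Gamma> \<and> (f x, f y) \<in> D} \<in> unif \<Gamma>)"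

end

theory Submission
  imports Defs
begin

text \<open>Path connectedness of a quotient \<open>\<Gamma>/R\<close> can be read off in \<open>\<Gamma>\<close> itself: two vertices
  become connected in \<open>\<Gamma>/R\<close> iff they are joined by a chain of \<open>R\<close>-steps and of edges taken
  modulo \<open>R\<close>. A path in \<open>\<Sigma>\<close> is such a chain for every \<open>R\<close>, which gives (1). For (2) and (3),
  pull a compatible cofinite entourage \<open>R\<close> of the target back along the inclusion
  \<open>\<Sigma> \<rightarrow> closure \<Sigma>\<close>, resp. along \<open>f\<close>: uniform continuity makes the pullback an entourage, so
  it is a compatible cofinite entourage of \<open>\<Sigma>\<close> and \<open>\<Sigma>\<close> is connected modulo it. Chains in \<open>\<Sigma>\<close>
  map to chains in the target, and since the image is dense, every vertex of the target is
  \<open>R\<close>-equivalent to the image of a vertex of \<open>\<Sigma>\<close>.\<close>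

definition adjacency :: "('a, 'b) cgraph_scheme \<Rightarrow> ('a \<times> 'a) set" where
  "adjacency G = (\<lambda>e. (src G e, tgt G e)) ` edges G"

definition is_edge_path :: "('a, 'b) cgraph_scheme \<Rightarrow> 'a list \<Rightarrow> bool" where
  "is_edge_path G es \<longleftrightarrow> es \<noteq> [] \<and> set es \<subseteq> edges G \<and>
     (\<forall>i. Suc i < length es \<longrightarrow> tgt G (es ! i) = src G (es ! Suc i))"

lemma is_edge_path_Cons:
  "is_edge_path G (e # es) \<longleftrightarrow>
     e \<in> edges G \<and> (es = [] \<or> is_edge_path G es \<and> tgt G e = src G (hd es))"
proof (cases es)
  case (Cons e' es')
  have "(\<forall>i. Suc i < length (e # es) \<longrightarrow> tgt G ((e # es) ! i) = src G ((e # es) ! Suc i)) \<longleftrightarrow>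
        tgt G e = src G e' \<and> (\<forall>i. Suc i < length es \<longrightarrow> tgt G (es ! i) = src G (es ! Suc i))"
    using Cons by (auto simp: nth_Cons' less_Suc_eq_0_disj)
  then show ?thesis using Cons by (auto simp: is_edge_path_def)
qed (simp add: is_edge_path_def)

lemma edge_path_in_trancl:
  "is_edge_path G es \<Longrightarrow> (src G (hd es), tgt G (last es)) \<in> (adjacency G)\<^sup>+"
proof (induction es)
  case (Cons e es)
  have "(src G e, tgt G e) \<in> adjacency G"
    using Cons.prems by (auto simp: is_edge_path_Cons adjacency_def)
  with Cons show ?case by (auto simp: is_edge_path_Cons)
qed (simp add: is_edge_path_def)

lemma trancl_imp_edge_path:
  assumes "(v, w) \<in> (adjacency G)\<^sup>+"
  shows "\<exists>es. is_edge_path G es \<and> src G (hd es) = v \<and> tgt G (last es) = w"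
  using assms
proof (induction rule: converse_trancl_induct)
  case (base v)
  then obtain e where "e \<in> edges G" "v = src G e" "w = tgt G e" by (auto simp: adjacency_def)
  then show ?case by (intro exI[of _ "[e]"]) (simp add: is_edge_path_Cons)
next
  case (step v u)
  then obtain e es where "e \<in> edges G" "v = src G e" "u = tgt G e"
    and "is_edge_path G es" "src G (hd es) = u" "tgt G (last es) = w"
    by (auto simp: adjacency_def)
  then show ?case
    by (intro exI[of _ "e # es"]) (auto simp: is_edge_path_Cons dest: is_edge_path_def[THEN iffD1])
qed

lemma path_connected_graph_iff_adjacency:
  "path_connected_graph G \<longleftrightarrow> (\<forall>v\<in>verts G. \<forall>w\<in>verts G. (v, w) \<in> (adjacency G)\<^sup>*)"
proof -
  have "(v, w) \<in> (adjacency G)\<^sup>+ \<longleftrightarrow>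
        (\<exists>es. is_edge_path G es \<and> src G (hd es) = v \<and> tgt G (last es) = w)" for v w
    using edge_path_in_trancl trancl_imp_edge_path by metis
  then show ?thesis
    unfolding path_connected_graph_def rtrancl_eq_or_trancl is_edge_path_def by blast
qed

definition edge_step :: "('a, 'b) cgraph_scheme \<Rightarrow> ('a \<times> 'a) set \<Rightarrow> ('a \<times> 'a) set" where
  "edge_step G R = {(v, w). \<exists>e\<in>edges G. (v, src G e) \<in> R \<and> (tgt G e, w) \<in> R}"

definition connected_modulo :: "('a, 'b) cgraph_scheme \<Rightarrow> ('a \<times> 'a) set \<Rightarrow> bool" where
  "connected_modulo G R \<longleftrightarrow> (\<forall>v\<in>verts G. \<forall>w\<in>verts G. (v, w) \<in> (R \<union> edge_step G R)\<^sup>*)"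

lemma compatible_equiv: "compatible G R \<Longrightarrow> equiv (carrier G) R"
  unfolding compatible_def by blast

lemma compatible_verts_iff: "compatible G R \<Longrightarrow> (x, y) \<in> R \<Longrightarrow> x \<in> verts G \<longleftrightarrow> y \<in> verts G"
  unfolding compatible_def edges_def by blast

lemma verts_quotient_graph [simp]: "verts (quotient_graph G R) = verts G // R"
  by (simp add: quotient_graph_def)

lemma edges_quotient_graph:
  assumes "compatible G R"
  shows "edges (quotient_graph G R) = (\<lambda>e. R `` {e}) ` edges G"
proof -
  have eq: "equiv (carrier G) R" using compatible_equiv[OF assms] .
  have "R `` {x} \<in> verts G // R \<longleftrightarrow> x \<in> verts G" if "x \<in> carrier G" for x
  proof
    assume "R `` {x} \<in> verts G // R"
    then obtain y where "y \<in> verts G" "R `` {x} = R `` {y}" by (auto elim: quotientE)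
    moreover have "x \<in> R `` {x}" using that eq by (auto simp: equiv_def refl_on_def)
    ultimately show "x \<in> verts G" using compatible_verts_iff[OF assms] by blast
  qed (rule quotientI)
  then show ?thesis
    unfolding edges_def quotient_graph_def by (auto simp: quotient_def)
qed

lemma src_tgt_quotient_graph:
  assumes "compatible G R" and "e \<in> edges G"
  shows "src (quotient_graph G R) (R `` {e}) = R `` {src G e}"
    and "tgt (quotient_graph G R) (R `` {e}) = R `` {tgt G e}"
proof -
  have eq: "equiv (carrier G) R" using compatible_equiv[OF assms(1)] .
  have "e \<in> R `` {e}" using assms(2) eq by (auto simp: edges_def equiv_def refl_on_def)
  then have "(e, SOME x. x \<in> R `` {e}) \<in> R" by (auto intro: someI)
  then have "(src G e, src G (SOME x. x \<in> R `` {e})) \<in> R"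
    and "(tgt G e, tgt G (SOME x. x \<in> R `` {e})) \<in> R"
    using assms unfolding compatible_def by blast+
  then show "src (quotient_graph G R) (R `` {e}) = R `` {src G e}"
    and "tgt (quotient_graph G R) (R `` {e}) = R `` {tgt G e}"
    unfolding quotient_graph_def by (simp_all add: equiv_class_eq[OF eq])
qed

lemma adjacency_quotient_graph_iff:
  assumes "compatible G R" and "v \<in> carrier G" and "w \<in> carrier G"
  shows "(R `` {v}, R `` {w}) \<in> adjacency (quotient_graph G R) \<longleftrightarrow> (v, w) \<in> edge_step G R"
proof
  have eq: "equiv (carrier G) R" using compatible_equiv[OF assms(1)] .
  assume "(R `` {v}, R `` {w}) \<in> adjacency (quotient_graph G R)"
  then obtain e where e: "e \<in> edges G" "R `` {v} = R `` {src G e}" "R `` {w} = R `` {tgt G e}"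
    unfolding adjacency_def edges_quotient_graph[OF assms(1)]
    using src_tgt_quotient_graph[OF assms(1)] by auto
  have "(v, src G e) \<in> R" using eq_equiv_class[OF e(2)[symmetric] eq assms(2)] eq
    by (meson equiv_def symD)
  moreover have "(tgt G e, w) \<in> R" using eq_equiv_class[OF e(3)[symmetric] eq assms(3)] .
  ultimately show "(v, w) \<in> edge_step G R" using e(1) unfolding edge_step_def by blast
next
  have eq: "equiv (carrier G) R" using compatible_equiv[OF assms(1)] .
  assume "(v, w) \<in> edge_step G R"
  then obtain e where e: "e \<in> edges G" "(v, src G e) \<in> R" "(tgt G e, w) \<in> R"
    unfolding edge_step_def by blast
  then have "R `` {v} = src (quotient_graph G R) (R `` {e})"
    and "R `` {w} = tgt (quotient_graph G R) (R `` {e})"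
    using src_tgt_quotient_graph[OF assms(1) e(1)] equiv_class_eq[OF eq] by auto
  then show "(R `` {v}, R `` {w}) \<in> adjacency (quotient_graph G R)"
    unfolding adjacency_def edges_quotient_graph[OF assms(1)] using e(1) by auto
qed

lemma compatible_src_tgt_in_carrier:
  assumes "compatible G R" and "e \<in> edges G"
  shows "src G e \<in> carrier G" and "tgt G e \<in> carrier G"
proof -
  have eq: "equiv (carrier G) R" using compatible_equiv[OF assms(1)] .
  then have "(e, e) \<in> R" using assms(2) by (auto simp: edges_def equiv_def refl_on_def)
  then have "(src G e, src G e) \<in> R" "(tgt G e, tgt G e) \<in> R"
    using assms unfolding compatible_def by blast+
  then show "src G e \<in> carrier G" "tgt G e \<in> carrier G"
    using eq by (auto simp: equiv_def refl_on_def)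
qed

theorem path_connected_quotient_graph_iff:
  assumes comp: "compatible G R" and verts: "verts G \<subseteq> carrier G"
  shows "path_connected_graph (quotient_graph G R) \<longleftrightarrow> connected_modulo G R"
proof -
  let ?Q = "quotient_graph G R" and ?S = "R \<union> edge_step G R"
  have eq: "equiv (carrier G) R" using compatible_equiv[OF comp] .
  have step_carrier: "?S \<subseteq> carrier G \<times> carrier G"
    using eq unfolding edge_step_def equiv_def refl_on_def by blast
  have to_quotient: "(R `` {x}, R `` {y}) \<in> (adjacency ?Q)\<^sup>*" if "(x, y) \<in> ?S\<^sup>*" for x y
    using that
  proof (induction rule: rtrancl_induct)
    case (step y z)
    have "R `` {y} = R `` {z} \<or> (R `` {y}, R `` {z}) \<in> adjacency ?Q"
      using step(2) step_carrier equiv_class_eq[OF eq] adjacency_quotient_graph_iff[OF comp]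
      by blast
    with step.IH show ?case by auto
  qed simp
  have from_quotient: "(v, w) \<in> ?S\<^sup>*"
    if "(R `` {v}, a) \<in> (adjacency ?Q)\<^sup>*" "v \<in> carrier G" "w \<in> carrier G" "a = R `` {w}"
    for v w a
    using that(1,3,4)
  proof (induction arbitrary: w rule: rtrancl_induct)
    case base
    then show ?case using eq_equiv_class[OF _ eq] by blast
  next
    case (step a b)
    then obtain e where e: "e \<in> edges G" "a = R `` {src G e}" "b = R `` {tgt G e}"
      unfolding adjacency_def edges_quotient_graph[OF comp]
      using src_tgt_quotient_graph[OF comp] by auto
    have src_e: "src G e \<in> carrier G"
      using compatible_src_tgt_in_carrier[OF comp e(1)] by blast
    have "(v, src G e) \<in> ?S\<^sup>*" using step.IH[OF src_e e(2)] .
    moreover have "(src G e, w) \<in> edge_step G R"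
      using adjacency_quotient_graph_iff[OF comp src_e step.prems(1)] step(2) e step.prems(2)
      by simp
    ultimately show ?case by (meson UnI2 rtrancl.rtrancl_into_rtrancl)
  qed
  show ?thesis
    unfolding path_connected_graph_iff_adjacency connected_modulo_def verts_quotient_graph
  proof (intro iffI ballI)
    fix v w assume "\<forall>a\<in>verts G // R. \<forall>b\<in>verts G // R. (a, b) \<in> (adjacency ?Q)\<^sup>*"
      and "v \<in> verts G" "w \<in> verts G"
    then show "(v, w) \<in> ?S\<^sup>*" using from_quotient verts by (blast intro: quotientI)
  next
    fix a b assume "\<forall>v\<in>verts G. \<forall>w\<in>verts G. (v, w) \<in> ?S\<^sup>*"
      and "a \<in> verts G // R" "b \<in> verts G // R"
    then show "(a, b) \<in> (adjacency ?Q)\<^sup>*" using to_quotient by (auto elim!: quotientE)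
  qed
qed

lemma path_connected_imp_cofinitely_connected:
  assumes graph: "is_graph G" and conn: "path_connected_graph G"
  shows "cofinitely_connected G"
  unfolding cofinitely_connected_def
proof (intro allI impI)
  fix R assume "compatible_cofinite_entourage G R"
  then have comp: "compatible G R" by (simp add: compatible_cofinite_entourage_def)
  have verts: "verts G \<subseteq> carrier G" using graph by (simp add: is_graph_def)
  have "adjacency G \<subseteq> edge_step G R"
  proof
    fix p assume "p \<in> adjacency G"
    then obtain e where e: "e \<in> edges G" "p = (src G e, tgt G e)" by (auto simp: adjacency_def)
    then have "src G e \<in> carrier G" "tgt G e \<in> carrier G"
      using graph verts by (auto simp: is_graph_def)
    then have "(src G e, src G e) \<in> R" "(tgt G e, tgt G e) \<in> R"
      using compatible_equiv[OF comp] by (auto simp: equiv_def refl_on_def)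
    then show "p \<in> edge_step G R" using e by (auto simp: edge_step_def)
  qed
  then have "(adjacency G)\<^sup>* \<subseteq> (R \<union> edge_step G R)\<^sup>*" by (intro rtrancl_mono) blast
  then have "connected_modulo G R"
    using conn unfolding path_connected_graph_iff_adjacency connected_modulo_def by blast
  then show "path_connected_graph (quotient_graph G R)"
    using path_connected_quotient_graph_iff[OF comp verts] by blast
qed

definition pullback_rel :: "('a, 'b) cgraph_scheme \<Rightarrow> ('a \<Rightarrow> 'c) \<Rightarrow> ('c \<times> 'c) set \<Rightarrow> ('a \<times> 'a) set" where
  "pullback_rel G f R = inv_image R f \<inter> carrier G \<times> carrier G"

lemma equiv_inv_image_restrict:
  assumes "equiv B R" and "f ` A \<subseteq> B"
  shows "equiv A (inv_image R f \<inter> A \<times> A)"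
proof (rule equivI)
  show "refl_on A (inv_image R f \<inter> A \<times> A)"
    using assms by (auto simp: equiv_def refl_on_def)
  show "sym (inv_image R f \<inter> A \<times> A)"
    using assms(1) by (auto intro!: symI elim!: equivE dest: symD)
  show "trans (inv_image R f \<inter> A \<times> A)"
    using assms(1) by (auto intro!: transI elim!: equivE dest: transD)
qed auto

lemma graph_map_verts_iff:
  "graph_map G H f \<Longrightarrow> x \<in> carrier G \<Longrightarrow> f x \<in> verts H \<longleftrightarrow> x \<in> verts G"
  unfolding graph_map_def edges_def by blast

lemma graph_map_carrier:
  "is_graph H \<Longrightarrow> graph_map G H f \<Longrightarrow> f ` carrier G \<subseteq> carrier H"
  unfolding graph_map_def is_graph_def edges_def by blast

lemma compatible_pullback_rel:
  assumes "is_graph G" "is_graph H" and f: "graph_map G H f" and comp: "compatible H R"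
  shows "compatible G (pullback_rel G f R)"
proof -
  define R' where "R' = pullback_rel G f R"
  have fc: "f ` carrier G \<subseteq> carrier H" using graph_map_carrier[OF assms(2) f] .
  have edge_ends: "src G e \<in> carrier G" "tgt G e \<in> carrier G" "rev G e \<in> carrier G"
    if "e \<in> edges G" for e
    using assms(1) that unfolding is_graph_def edges_def by blast+
  have f_edge: "f e \<in> edges H" "f (src G e) = src H (f e)" "f (tgt G e) = tgt H (f e)"
    "f (rev G e) = rev H (f e)" if "e \<in> edges G" for e
    using f that unfolding graph_map_def by blast+
  have "equiv (carrier G) R'"
    unfolding R'_def pullback_rel_def using compatible_equiv[OF comp] fc
    by (rule equiv_inv_image_restrict)
  moreover have "R' \<subseteq> verts G \<times> verts G \<union> edges G \<times> edges G"
  proof (rule subrelI)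
    fix x y assume "(x, y) \<in> R'"
    then have "x \<in> carrier G" "y \<in> carrier G" "(f x, f y) \<in> R"
      unfolding R'_def pullback_rel_def by auto
    then have "x \<in> verts G \<longleftrightarrow> y \<in> verts G"
      using compatible_verts_iff[OF comp] graph_map_verts_iff[OF f] by metis
    with \<open>x \<in> carrier G\<close> \<open>y \<in> carrier G\<close>
    show "(x, y) \<in> verts G \<times> verts G \<union> edges G \<times> edges G" unfolding edges_def by blast
  qed
  moreover have "(src G e, src G e') \<in> R' \<and> (tgt G e, tgt G e') \<in> R' \<and> (rev G e, rev G e') \<in> R'"
    if "(e, e') \<in> R'" "e \<in> edges G" for e e'
  proof -
    have "e' \<in> edges G" using that \<open>R' \<subseteq> _\<close> unfolding edges_def by blast
    then show ?thesis
      using that comp f_edge[OF that(2)] f_edge[of e'] edge_ends[OF that(2)] edge_ends[of e']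
      unfolding compatible_def R'_def pullback_rel_def by auto
  qed
  moreover have "(e, rev G e) \<notin> R'" if "e \<in> edges G" for e
    using that comp f_edge[OF that] unfolding compatible_def R'_def pullback_rel_def by auto
  ultimately show ?thesis unfolding compatible_def R'_def by blast
qed

lemma finite_quotient_pullback_rel:
  assumes "f ` carrier G \<subseteq> carrier H" and "finite (carrier H // R)"
  shows "finite (carrier G // pullback_rel G f R)"
proof -
  have "carrier G // pullback_rel G f R \<subseteq> (\<lambda>C. f -` C \<inter> carrier G) ` (carrier H // R)"
  proof
    fix C assume "C \<in> carrier G // pullback_rel G f R"
    then obtain x where x: "x \<in> carrier G" "C = pullback_rel G f R `` {x}"
      by (auto elim: quotientE)
    then have "C = f -` (R `` {f x}) \<inter> carrier G" unfolding pullback_rel_def by auto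
    moreover have "R `` {f x} \<in> carrier H // R" using x(1) assms(1) by (auto intro: quotientI)
    ultimately show "C \<in> (\<lambda>C. f -` C \<inter> carrier G) ` (carrier H // R)" by blast
  qed
  then show ?thesis using assms(2) by (meson finite_surj)
qed

lemma rtrancl_inv_image_subset: "(inv_image S f)\<^sup>* \<subseteq> inv_image (S\<^sup>*) f"
proof clarify
  fix x y assume "(x, y) \<in> (inv_image S f)\<^sup>*"
  then show "(x, y) \<in> inv_image (S\<^sup>*) f"
    by (induction rule: rtrancl_induct) (auto intro: rtrancl_into_rtrancl)
qed

lemma connected_modulo_pullback_rel:
  assumes f: "graph_map G H f" and "sym R"
    and dense: "\<forall>v\<in>verts H. \<exists>u\<in>verts G. (v, f u) \<in> R"
    and conn: "connected_modulo G (pullback_rel G f R)"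
  shows "connected_modulo H R"
  unfolding connected_modulo_def
proof (intro ballI)
  let ?R' = "pullback_rel G f R"
  have "edge_step G ?R' \<subseteq> inv_image (edge_step H R) f"
  proof
    fix p assume "p \<in> edge_step G ?R'"
    then obtain x y e where "p = (x, y)" "e \<in> edges G" "(x, src G e) \<in> ?R'" "(tgt G e, y) \<in> ?R'"
      unfolding edge_step_def by blast
    moreover have "f e \<in> edges H" "f (src G e) = src H (f e)" "f (tgt G e) = tgt H (f e)"
      using f \<open>e \<in> edges G\<close> unfolding graph_map_def by auto
    ultimately show "p \<in> inv_image (edge_step H R) f"
      unfolding edge_step_def pullback_rel_def by auto
  qed
  then have "?R' \<union> edge_step G ?R' \<subseteq> inv_image (R \<union> edge_step H R) f"
    unfolding pullback_rel_def by auto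
  then have "(?R' \<union> edge_step G ?R')\<^sup>* \<subseteq> (inv_image (R \<union> edge_step H R) f)\<^sup>*"
    by (rule rtrancl_mono)
  also have "\<dots> \<subseteq> inv_image ((R \<union> edge_step H R)\<^sup>*) f"
    by (rule rtrancl_inv_image_subset)
  finally have chains: "(?R' \<union> edge_step G ?R')\<^sup>* \<subseteq> inv_image ((R \<union> edge_step H R)\<^sup>*) f" .
  have image_conn: "(f u, f u') \<in> (R \<union> edge_step H R)\<^sup>*"
    if "u \<in> verts G" "u' \<in> verts G" for u u'
  proof -
    have "(u, u') \<in> (?R' \<union> edge_step G ?R')\<^sup>*"
      using conn that unfolding connected_modulo_def by blast
    from subsetD[OF chains this] show ?thesis by simp
  qed
  fix v w assume "v \<in> verts H" "w \<in> verts H"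
  then obtain u u' where u: "u \<in> verts G" "(v, f u) \<in> R" and u': "u' \<in> verts G" "(w, f u') \<in> R"
    using dense by meson
  have "(v, f u) \<in> (R \<union> edge_step H R)\<^sup>*" using u(2) by blast
  moreover have "(f u, f u') \<in> (R \<union> edge_step H R)\<^sup>*" using image_conn[OF u(1) u'(1)] .
  moreover have "(f u', w) \<in> R" using \<open>sym R\<close> u'(2) by (rule symD)
  then have "(f u', w) \<in> (R \<union> edge_step H R)\<^sup>*" by blast
  ultimately show "(v, w) \<in> (R \<union> edge_step H R)\<^sup>*"
    by (rule rtrancl_trans[OF rtrancl_trans])
qed

definition dense_image :: "('a, 'b) cgraph_scheme \<Rightarrow> ('c, 'd) cgraph_scheme \<Rightarrow> ('a \<Rightarrow> 'c) \<Rightarrow> bool" where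
  "dense_image G H f \<longleftrightarrow> (\<forall>v\<in>carrier H. \<forall>D\<in>unif H. \<exists>u\<in>carrier G. (v, f u) \<in> D)"

theorem cofinitely_connected_dense_image:
  assumes graphs: "is_graph G" "is_graph H" and f: "graph_map G H f"
    and cont: "unif_continuous G H f" and dense: "dense_image G H f"
    and conn: "cofinitely_connected G"
  shows "cofinitely_connected H"
  unfolding cofinitely_connected_def
proof (intro allI impI)
  fix R assume "compatible_cofinite_entourage H R"
  then have comp: "compatible H R" and R: "R \<in> unif H" "finite (carrier H // R)"
    unfolding compatible_cofinite_entourage_def by auto
  let ?R' = "pullback_rel G f R"
  have "?R' = {(x, y). x \<in> carrier G \<and> y \<in> carrier G \<and> (f x, f y) \<in> R}"
    unfolding pullback_rel_def by auto
  then have "?R' \<in> unif G" using cont R(1) unfolding unif_continuous_def by simp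
  moreover have "compatible G ?R'" using compatible_pullback_rel[OF graphs f comp] .
  moreover have "finite (carrier G // ?R')"
    using finite_quotient_pullback_rel[OF graph_map_carrier[OF graphs(2) f] R(2)] .
  ultimately have "path_connected_graph (quotient_graph G ?R')"
    using conn unfolding cofinitely_connected_def compatible_cofinite_entourage_def by blast
  then have "connected_modulo G ?R'"
    using path_connected_quotient_graph_iff[OF \<open>compatible G ?R'\<close>] graphs(1)
    by (simp add: is_graph_def)
  moreover have "\<exists>u\<in>verts G. (v, f u) \<in> R" if "v \<in> verts H" for v
  proof -
    have "v \<in> carrier H" using that graphs(2) by (auto simp: is_graph_def)
    then obtain u where "u \<in> carrier G" "(v, f u) \<in> R"
      using dense R(1) unfolding dense_image_def by blast
    moreover from this have "u \<in> verts G"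
      using that compatible_verts_iff[OF comp] graph_map_verts_iff[OF f] by blast
    ultimately show ?thesis by blast
  qed
  moreover have "sym R" using compatible_equiv[OF comp] by (rule equivE)
  ultimately have "connected_modulo H R"
    using connected_modulo_pullback_rel[OF f] by blast
  then show "path_connected_graph (quotient_graph H R)"
    using path_connected_quotient_graph_iff[OF comp] graphs(2) by (simp add: is_graph_def)
qed

lemma carrier_uniform_subgraph [simp]: "carrier (uniform_subgraph \<Gamma> S) = S"
  and verts_uniform_subgraph [simp]: "verts (uniform_subgraph \<Gamma> S) = verts \<Gamma> \<inter> S"
  and edges_uniform_subgraph [simp]: "edges (uniform_subgraph \<Gamma> S) = S - verts \<Gamma>"
  and src_uniform_subgraph [simp]: "src (uniform_subgraph \<Gamma> S) = src \<Gamma>"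
  and tgt_uniform_subgraph [simp]: "tgt (uniform_subgraph \<Gamma> S) = tgt \<Gamma>"
  and rev_uniform_subgraph [simp]: "rev (uniform_subgraph \<Gamma> S) = rev \<Gamma>"
  and unif_uniform_subgraph [simp]: "unif (uniform_subgraph \<Gamma> S) = {D \<inter> S \<times> S | D. D \<in> unif \<Gamma>}"
  by (auto simp: uniform_subgraph_def edges_def)

lemma is_graph_uniform_subgraph:
  "is_graph \<Gamma> \<Longrightarrow> is_subgraph S \<Gamma> \<Longrightarrow> is_graph (uniform_subgraph \<Gamma> S)"
  unfolding is_graph_def is_subgraph_def edges_def by auto

lemma graph_map_uniform_subgraph:
  assumes "graph_map \<Gamma> \<Delta> f" "S \<subseteq> carrier \<Gamma>" "f ` S \<subseteq> T"
  shows "graph_map (uniform_subgraph \<Gamma> S) (uniform_subgraph \<Delta> T) f"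
  using assms unfolding graph_map_def by (auto simp: edges_def) blast

lemma unif_continuous_uniform_subgraph:
  assumes "unif_continuous \<Gamma> \<Delta> f" "S \<subseteq> carrier \<Gamma>" "f ` S \<subseteq> T"
  shows "unif_continuous (uniform_subgraph \<Gamma> S) (uniform_subgraph \<Delta> T) f"
  unfolding unif_continuous_def carrier_uniform_subgraph
proof
  fix D assume "D \<in> unif (uniform_subgraph \<Delta> T)"
  then obtain D0 where D0: "D0 \<in> unif \<Delta>" "D = D0 \<inter> T \<times> T" by auto
  let ?E = "{(x, y). x \<in> carrier \<Gamma> \<and> y \<in> carrier \<Gamma> \<and> (f x, f y) \<in> D0}"
  have "?E \<in> unif \<Gamma>" using assms(1) D0(1) unfolding unif_continuous_def by blast
  moreover have "{(x, y). x \<in> S \<and> y \<in> S \<and> (f x, f y) \<in> D} = ?E \<inter> S \<times> S"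
    using assms(2,3) D0(2) by auto
  ultimately show "{(x, y). x \<in> S \<and> y \<in> S \<and> (f x, f y) \<in> D} \<in> unif (uniform_subgraph \<Gamma> S)"
    unfolding unif_uniform_subgraph by blast
qed

lemma graph_map_id: "graph_map \<Gamma> \<Gamma> id"
  unfolding graph_map_def by auto

lemma unif_continuous_id:
  assumes "uniformity_on (carrier \<Gamma>) (unif \<Gamma>)"
  shows "unif_continuous \<Gamma> \<Gamma> id"
  unfolding unif_continuous_def
proof
  fix D assume D: "D \<in> unif \<Gamma>"
  moreover have "unif \<Gamma> \<subseteq> Pow (carrier \<Gamma> \<times> carrier \<Gamma>)"
    using assms unfolding uniformity_on_def by (elim conjE)
  ultimately have "D \<subseteq> carrier \<Gamma> \<times> carrier \<Gamma>" by blast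
  then have "{(x, y). x \<in> carrier \<Gamma> \<and> y \<in> carrier \<Gamma> \<and> (id x, id y) \<in> D} = D" by auto
  with D show "{(x, y). x \<in> carrier \<Gamma> \<and> y \<in> carrier \<Gamma> \<and> (id x, id y) \<in> D} \<in> unif \<Gamma>" by simp
qed

lemma subset_unif_closure:
  assumes "uniformity_on (carrier \<Gamma>) (unif \<Gamma>)" and "S \<subseteq> carrier \<Gamma>"
  shows "S \<subseteq> unif_closure \<Gamma> S"
proof
  fix x assume x: "x \<in> S"
  have "\<forall>D\<in>unif \<Gamma>. Id_on (carrier \<Gamma>) \<subseteq> D"
    using assms(1) unfolding uniformity_on_def by (elim conjE)
  then have "\<forall>D\<in>unif \<Gamma>. (x, x) \<in> D" using x assms(2) by blast
  then show "x \<in> unif_closure \<Gamma> S" using x assms(2) unfolding unif_closure_def by blast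
qed

lemma is_subgraph_unif_closure:
  assumes "cofinite_graph \<Gamma>" and S: "is_subgraph S \<Gamma>"
  shows "is_subgraph (unif_closure \<Gamma> S) \<Gamma>"
  unfolding is_subgraph_def
proof (intro conjI ballI)
  show "unif_closure \<Gamma> S \<subseteq> carrier \<Gamma>" unfolding unif_closure_def by blast
  fix e assume e: "e \<in> unif_closure \<Gamma> S \<inter> edges \<Gamma>"
  have "is_graph \<Gamma>" using assms(1) by (simp add: cofinite_graph_def)
  then have ends: "src \<Gamma> e \<in> carrier \<Gamma>" "tgt \<Gamma> e \<in> carrier \<Gamma>" "rev \<Gamma> e \<in> carrier \<Gamma>"
    using e unfolding is_graph_def edges_def by blast+
  have "\<exists>y\<in>S. (src \<Gamma> e, y) \<in> D \<and> (\<exists>y\<in>S. (tgt \<Gamma> e, y) \<in> D) \<and> (\<exists>y\<in>S. (rev \<Gamma> e, y) \<in> D)"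
    if "D \<in> unif \<Gamma>" for D
  proof -
    obtain R where R: "compatible_cofinite_entourage \<Gamma> R" "R \<subseteq> D"
      using assms(1) \<open>D \<in> unif \<Gamma>\<close> unfolding cofinite_graph_def by blast
    then have comp: "compatible \<Gamma> R" and "R \<in> unif \<Gamma>"
      unfolding compatible_cofinite_entourage_def by auto
    then obtain y where y: "y \<in> S" "(e, y) \<in> R" using e unfolding unif_closure_def by blast
    have "y \<in> edges \<Gamma>"
      using compatible_verts_iff[OF comp y(2)] y(1) S e unfolding is_subgraph_def edges_def by blast
    then have "src \<Gamma> y \<in> S" "tgt \<Gamma> y \<in> S" "rev \<Gamma> y \<in> S"
      using S y(1) unfolding is_subgraph_def by blast+
    moreover have "(src \<Gamma> e, src \<Gamma> y) \<in> R" "(tgt \<Gamma> e, tgt \<Gamma> y) \<in> R" "(rev \<Gamma> e, rev \<Gamma> y) \<in> R"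
      using comp y(2) e unfolding compatible_def by blast+
    ultimately show ?thesis using R(2) by blast
  qed
  then show "src \<Gamma> e \<in> unif_closure \<Gamma> S" "tgt \<Gamma> e \<in> unif_closure \<Gamma> S"
    "rev \<Gamma> e \<in> unif_closure \<Gamma> S"
    using ends unfolding unif_closure_def by blast+
qed

lemma dense_image_unif_closure:
  assumes "uniformity_on (carrier \<Gamma>) (unif \<Gamma>)" and "S \<subseteq> carrier \<Gamma>"
  shows "dense_image (uniform_subgraph \<Gamma> S) (uniform_subgraph \<Gamma> (unif_closure \<Gamma> S)) id"
  unfolding dense_image_def
proof (intro ballI)
  let ?T = "unif_closure \<Gamma> S"
  fix v D assume "v \<in> carrier (uniform_subgraph \<Gamma> ?T)" "D \<in> unif (uniform_subgraph \<Gamma> ?T)"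
  then obtain D0 where v: "v \<in> ?T" and D0: "D0 \<in> unif \<Gamma>" "D = D0 \<inter> ?T \<times> ?T" by auto
  then obtain y where "y \<in> S" "(v, y) \<in> D0" unfolding unif_closure_def by blast
  moreover have "y \<in> ?T" using \<open>y \<in> S\<close> subset_unif_closure[OF assms] by blast
  ultimately show "\<exists>u\<in>carrier (uniform_subgraph \<Gamma> S). (v, id u) \<in> D" using v D0(2) by auto
qed

lemma is_subgraph_image:
  assumes \<Delta>: "is_graph \<Delta>" and f: "graph_map \<Gamma> \<Delta> f" and S: "is_subgraph S \<Gamma>"
  shows "is_subgraph (f ` S) \<Delta>"
  unfolding is_subgraph_def
proof (intro conjI ballI)
  have "S \<subseteq> carrier \<Gamma>" using S by (simp add: is_subgraph_def)
  then show "f ` S \<subseteq> carrier \<Delta>" using graph_map_carrier[OF \<Delta> f] by blast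
  fix e' assume "e' \<in> f ` S \<inter> edges \<Delta>"
  then obtain e where e: "e \<in> S" "e' = f e" "f e \<notin> verts \<Delta>" by (auto simp: edges_def)
  then have "e \<in> edges \<Gamma>"
    using \<open>S \<subseteq> carrier \<Gamma>\<close> graph_map_verts_iff[OF f] by (auto simp: edges_def)
  then have "src \<Gamma> e \<in> S" "tgt \<Gamma> e \<in> S" "rev \<Gamma> e \<in> S"
    and "f (src \<Gamma> e) = src \<Delta> e'" "f (tgt \<Gamma> e) = tgt \<Delta> e'" "f (rev \<Gamma> e) = rev \<Delta> e'"
    using S f e unfolding is_subgraph_def graph_map_def by auto
  then show "src \<Delta> e' \<in> f ` S" "tgt \<Delta> e' \<in> f ` S" "rev \<Delta> e' \<in> f ` S" by (metis image_eqI)+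
qed

lemma dense_image_image:
  assumes "uniformity_on (carrier \<Delta>) (unif \<Delta>)" and "f ` S \<subseteq> carrier \<Delta>"
  shows "dense_image (uniform_subgraph \<Gamma> S) (uniform_subgraph \<Delta> (f ` S)) f"
  unfolding dense_image_def
proof (intro ballI)
  fix v D assume "v \<in> carrier (uniform_subgraph \<Delta> (f ` S))" "D \<in> unif (uniform_subgraph \<Delta> (f ` S))"
  then obtain u D0 where "u \<in> S" "v = f u" "D0 \<in> unif \<Delta>" "D = D0 \<inter> f ` S \<times> f ` S" by auto
  moreover have "\<forall>D\<in>unif \<Delta>. Id_on (carrier \<Delta>) \<subseteq> D"
    using assms(1) unfolding uniformity_on_def by (elim conjE)
  moreover have "(f u, f u) \<in> Id_on (carrier \<Delta>)" using \<open>u \<in> S\<close> assms(2) by auto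
  ultimately have "(v, f u) \<in> D" by blast
  with \<open>u \<in> S\<close> show "\<exists>u\<in>carrier (uniform_subgraph \<Gamma> S). (v, f u) \<in> D" by auto
qed

corollary cofinitely_connected_unif_closure:
  assumes \<Gamma>: "cofinite_graph \<Gamma>" and S: "is_subgraph S \<Gamma>"
    and conn: "cofinitely_connected (uniform_subgraph \<Gamma> S)"
  shows "cofinitely_connected (uniform_subgraph \<Gamma> (unif_closure \<Gamma> S))"
proof (rule cofinitely_connected_dense_image[OF _ _ _ _ _ conn])
  have graph: "is_graph \<Gamma>" and unif: "uniformity_on (carrier \<Gamma>) (unif \<Gamma>)"
    using \<Gamma> by (simp_all add: cofinite_graph_def)
  have S_carrier: "S \<subseteq> carrier \<Gamma>" using S by (simp add: is_subgraph_def)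
  have S_closure: "id ` S \<subseteq> unif_closure \<Gamma> S" using subset_unif_closure[OF unif S_carrier] by simp
  show "is_graph (uniform_subgraph \<Gamma> S)" using is_graph_uniform_subgraph[OF graph S] .
  show "is_graph (uniform_subgraph \<Gamma> (unif_closure \<Gamma> S))"
    using is_graph_uniform_subgraph[OF graph is_subgraph_unif_closure[OF \<Gamma> S]] .
  show "graph_map (uniform_subgraph \<Gamma> S) (uniform_subgraph \<Gamma> (unif_closure \<Gamma> S)) id"
    using graph_map_uniform_subgraph[OF graph_map_id S_carrier S_closure] .
  show "unif_continuous (uniform_subgraph \<Gamma> S) (uniform_subgraph \<Gamma> (unif_closure \<Gamma> S)) id"
    using unif_continuous_uniform_subgraph[OF unif_continuous_id[OF unif] S_carrier S_closure] .
  show "dense_image (uniform_subgraph \<Gamma> S) (uniform_subgraph \<Gamma> (unif_closure \<Gamma> S)) id"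
    using dense_image_unif_closure[OF unif S_carrier] .
qed

corollary cofinitely_connected_image:
  assumes \<Gamma>: "cofinite_graph \<Gamma>" and S: "is_subgraph S \<Gamma>" and \<Delta>: "cofinite_graph \<Delta>"
    and f: "graph_map \<Gamma> \<Delta> f" and cont: "unif_continuous \<Gamma> \<Delta> f"
    and conn: "cofinitely_connected (uniform_subgraph \<Gamma> S)"
  shows "cofinitely_connected (uniform_subgraph \<Delta> (f ` S))"
proof (rule cofinitely_connected_dense_image[OF _ _ _ _ _ conn])
  have graphs: "is_graph \<Gamma>" "is_graph \<Delta>" and unif: "uniformity_on (carrier \<Delta>) (unif \<Delta>)"
    using \<Gamma> \<Delta> by (simp_all add: cofinite_graph_def)
  have S_carrier: "S \<subseteq> carrier \<Gamma>" using S by (simp add: is_subgraph_def)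
  have fS: "is_subgraph (f ` S) \<Delta>" using is_subgraph_image[OF graphs(2) f S] .
  then have fS_carrier: "f ` S \<subseteq> carrier \<Delta>" by (simp add: is_subgraph_def)
  show "is_graph (uniform_subgraph \<Gamma> S)" using is_graph_uniform_subgraph[OF graphs(1) S] .
  show "is_graph (uniform_subgraph \<Delta> (f ` S))" using is_graph_uniform_subgraph[OF graphs(2) fS] .
  show "graph_map (uniform_subgraph \<Gamma> S) (uniform_subgraph \<Delta> (f ` S)) f"
    using graph_map_uniform_subgraph[OF f S_carrier subset_refl] .
  show "unif_continuous (uniform_subgraph \<Gamma> S) (uniform_subgraph \<Delta> (f ` S)) f"
    using unif_continuous_uniform_subgraph[OF cont S_carrier subset_refl] .
  show "dense_image (uniform_subgraph \<Gamma> S) (uniform_subgraph \<Delta> (f ` S)) f"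
    using dense_image_image[OF unif fS_carrier] .
qed

theorem mainTheorem2:
  fixes \<Gamma> :: "'a cgraph" and S :: "'a set"
  assumes "cofinite_graph \<Gamma>"
    and "is_subgraph S \<Gamma>"
  shows "(path_connected_graph (uniform_subgraph \<Gamma> S) \<longrightarrow>
            cofinitely_connected (uniform_subgraph \<Gamma> S))
       \<and> (cofinitely_connected (uniform_subgraph \<Gamma> S) \<longrightarrow>
            cofinitely_connected (uniform_subgraph \<Gamma> (unif_closure \<Gamma> S)))
       \<and> (\<forall>(\<Delta> :: 'b cgraph) f. cofinite_graph \<Delta> \<and> graph_map \<Gamma> \<Delta> f \<and> unif_continuous \<Gamma> \<Delta> f \<and>
            cofinitely_connected (uniform_subgraph \<Gamma> S) \<longrightarrow>
            cofinitely_connected (uniform_subgraph \<Delta> (f ` S)))"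
proof (intro conjI impI allI)
  have "is_graph (uniform_subgraph \<Gamma> S)"
    using assms is_graph_uniform_subgraph by (auto simp: cofinite_graph_def)
  then show "path_connected_graph (uniform_subgraph \<Gamma> S) \<Longrightarrow>
      cofinitely_connected (uniform_subgraph \<Gamma> S)"
    by (rule path_connected_imp_cofinitely_connected)
  show "cofinitely_connected (uniform_subgraph \<Gamma> S) \<Longrightarrow>
      cofinitely_connected (uniform_subgraph \<Gamma> (unif_closure \<Gamma> S))"
    using cofinitely_connected_unif_closure[OF assms] .
  fix \<Delta> :: "'b cgraph" and f
  show "cofinite_graph \<Delta> \<and> graph_map \<Gamma> \<Delta> f \<and> unif_continuous \<Gamma> \<Delta> f \<and>
      cofinitely_connected (uniform_subgraph \<Gamma> S) \<Longrightarrow>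
      cofinitely_connected (uniform_subgraph \<Delta> (f ` S))"
    using cofinitely_connected_image[OF assms] by blast
qed

end
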